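(* Let $\mathcal{A}$ be finite, $p\in\Delta_{\mathcal{A}}$ of full support, $\mathcal{E}$ an exponential family, and $q(T|A)\in C(\mathcal{A},\mathcal{T})$. Then $D(q(T)\|\tilde q(T))\le\Lambda:=D(p\|\tilde p)$, and the following are equivalent: (i) $D(q(T)\|\tilde q(T))=\Lambda$; (ii) for every $t\in\mathrm{supp}(q(T))$ there exists $\mathcal{A}_j\in\bar{\mathcal{A}}$ with $\mathcal{A}^q_t\subseteq\mathcal{A}_j$; (iii) the channel $\bar q\in C(\bar{\mathcal{A}},\mathcal{T})$ is congruent.
   Context: $\mathcal{T}=\mathbb{N}$. $\tilde p$ is the unique minimiser of $D(p\|r)$ over the closure of $\mathcal{E}$ (here of full support). $\bar{\mathcal{A}}=\{\mathcal{A}_j\}_j$ is the partition for $a\sim a'\iff p(a)\tilde p(a')=p(a')\tilde p(a)$. $q(t)=\sum_ap(a)q(t|a)$, $\tilde q(t)=\sum_a\tilde p(a)q(t|a)$, $\mathcal{A}^q_t:=\{a:q(t|a)>0\}$, $\bar q(t|\mathcal{A}_j):=\frac{\sum_{a\in\mathcal{A}_j}q(t|a)p(a)}{p(\mathcal{A}_j)}$. A channel $\gamma\in C(\mathcal{B},\mathcal{T})$ is congruent if there is a function $f:\mathcal{T}\to\mathcal{B}$ with $f\circ\gamma=e_{\mathcal{B}}$. *)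

theory Defs
  imports "HOL-Analysis.Analysis"
begin

definition KL :: "('b \<Rightarrow> real) \<Rightarrow> ('b \<Rightarrow> real) \<Rightarrow> ereal" where
  "KL mu nu =
     (if (\<forall>x. mu x > 0 \<longrightarrow> nu x > 0) \<and> (\<lambda>x. mu x * ln (mu x / nu x)) summable_on UNIV
      then ereal (\<Sum>\<^sub>\<infinity>x. mu x * ln (mu x / nu x)) else \<infinity>)"

definition expfam :: "('a::finite \<Rightarrow> real) \<Rightarrow> ('a \<Rightarrow> nat \<Rightarrow> real) \<Rightarrow> nat \<Rightarrow> ('a \<Rightarrow> real) set" where
  "expfam nu f d = {r. \<exists>\<theta>::nat \<Rightarrow> real.
      r = (\<lambda>a. nu a * exp (\<Sum>i<d. \<theta> i * f a i) /
               (\<Sum>b\<in>UNIV. nu b * exp (\<Sum>i<d. \<theta> i * f b i)))}"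

text \<open>Channel from a set B of inputs to T = nat: gamma b t = gamma(t|b).\<close>
definition channel :: "'b set \<Rightarrow> ('b \<Rightarrow> nat \<Rightarrow> real) \<Rightarrow> bool" where
  "channel B gamma \<longleftrightarrow> (\<forall>b\<in>B. (\<forall>t. gamma b t \<ge> 0) \<and> (gamma b has_sum 1) UNIV)"

definition outdist :: "('a::finite \<Rightarrow> real) \<Rightarrow> ('a \<Rightarrow> nat \<Rightarrow> real) \<Rightarrow> nat \<Rightarrow> real" where
  "outdist p q t = (\<Sum>a\<in>UNIV. p a * q a t)"

definition classes :: "('a::finite \<Rightarrow> real) \<Rightarrow> ('a \<Rightarrow> real) \<Rightarrow> 'a set set" where
  "classes p pt = UNIV // {(a, a'). p a * pt a' = p a' * pt a}"

definition qbar :: "('a::finite \<Rightarrow> real) \<Rightarrow> ('a \<Rightarrow> nat \<Rightarrow> real) \<Rightarrow> 'a set \<Rightarrow> nat \<Rightarrow> real" where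
  "qbar p q Aj t = (\<Sum>a\<in>Aj. q a t * p a) / sum p Aj"

text \<open>Congruent channel: there is f : T \<rightarrow> B with f o gamma = identity channel on B.\<close>
definition congruent_channel :: "'b set \<Rightarrow> ('b \<Rightarrow> nat \<Rightarrow> real) \<Rightarrow> bool" where
  "congruent_channel B gamma \<longleftrightarrow>
     (\<exists>f :: nat \<Rightarrow> 'b. (\<forall>t. f t \<in> B) \<and>
        (\<forall>b\<in>B. \<forall>b'\<in>B. (\<Sum>\<^sub>\<infinity>t\<in>{t. f t = b'}. gamma b t) = (if b = b' then 1 else 0)))"

end

theory Submission
  imports Defs
begin

text \<open>For a fixed output t the log-sum inequality gives
  q(t) ln (q(t) / q~(t)) \<le> \<Sum>a. p(a) ln (p(a) / p~(a)) q(t|a), with equality iff p/p~ is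
  constant on the support of q(t|.). Summing over t yields the data processing inequality, with
  equality iff every such support lies in a level set of p/p~, i.e. in a class of the partition.
  That in turn says that the merged channel qbar sends distinct classes to disjoint sets of outputs,
  which is congruence. Positivity of p~ holds because the minimiser has finite divergence from the
  normalised reference measure, a member of the exponential family.\<close>

lemma sum_pos_iff_ex_pos:
  fixes f :: "'i \<Rightarrow> real"
  assumes A: "finite A" and nonneg: "\<And>x. x \<in> A \<Longrightarrow> 0 \<le> f x"
  shows "0 < sum f A \<longleftrightarrow> (\<exists>x\<in>A. 0 < f x)"
proof
  assume "0 < sum f A"
  show "\<exists>x\<in>A. 0 < f x"
  proof (rule ccontr)
    assume "\<not> (\<exists>x\<in>A. 0 < f x)"
    then have "\<forall>x\<in>A. f x = 0" using nonneg by (simp add: not_less order_antisym)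
    then have "sum f A = 0" by simp
    with \<open>0 < sum f A\<close> show False by simp
  qed
next
  assume "\<exists>x\<in>A. 0 < f x"
  then obtain x where "x \<in> A" "0 < f x" by blast
  then show "0 < sum f A" using A nonneg by (intro sum_pos2)
qed

lemma has_sum_sum:
  fixes f :: "'i \<Rightarrow> 'b \<Rightarrow> 'c::topological_comm_monoid_add"
  assumes "finite I" "\<And>i. i \<in> I \<Longrightarrow> (f i has_sum s i) A"
  shows "((\<lambda>x. \<Sum>i\<in>I. f i x) has_sum (\<Sum>i\<in>I. s i)) A"
  using assms by (induction I rule: finite_induct) (auto intro: has_sum_add)

lemma has_sum_diff:
  fixes f g :: "'b \<Rightarrow> 'c::topological_ab_group_add"
  assumes "(f has_sum s) A" "(g has_sum t) A"
  shows "((\<lambda>x. f x - g x) has_sum (s - t)) A"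
  using has_sum_add[OF assms(1), of "\<lambda>x. - g x" "- t"] assms(2) by (simp add: has_sum_uminus)

lemma summable_on_between:
  fixes l g u :: "'b \<Rightarrow> real"
  assumes "l summable_on A" "u summable_on A" "\<And>x. x \<in> A \<Longrightarrow> l x \<le> g x" "\<And>x. x \<in> A \<Longrightarrow> g x \<le> u x"
  shows "g summable_on A"
proof -
  have "(\<lambda>x. u x - l x) summable_on A"
    using has_sum_diff assms(1,2) by (metis summable_on_def)
  then have "(\<lambda>x. g x - l x) summable_on A"
    by (rule summable_on_comparison_test) (use assms(3,4) in auto)
  then have "(\<lambda>x. (g x - l x) + l x) summable_on A" using assms(1) by (rule summable_on_add)
  then show ?thesis by simp
qed

lemma infsum_eq_iff_pointwise:
  fixes f g :: "'b \<Rightarrow> real"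
  assumes "f summable_on A" "g summable_on A" "\<And>x. x \<in> A \<Longrightarrow> f x \<le> g x"
  shows "infsum f A = infsum g A \<longleftrightarrow> (\<forall>x\<in>A. f x = g x)"
proof
  assume eq: "infsum f A = infsum g A"
  have "((\<lambda>x. g x - f x) has_sum (infsum g A - infsum f A)) A"
    using has_sum_diff assms(1,2) by (metis has_sum_infsum)
  then have summable: "(\<lambda>x. g x - f x) summable_on A" and le0: "infsum (\<lambda>x. g x - f x) A \<le> 0"
    using eq by (auto simp: has_sum_iff)
  have "g x - f x = 0" if "x \<in> A" for x
    by (rule nonneg_infsum_le_0D[OF le0 summable]) (use assms(3) that in auto)
  then show "\<forall>x\<in>A. f x = g x" by simp
qed (rule infsum_cong, simp)

lemma log_sum_term_bound:
  fixes a b k :: real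
  assumes "0 \<le> a" "0 \<le> b" "0 < a \<Longrightarrow> 0 < b" "0 < k"
  shows "0 \<le> a * ln (a / b) - a * ln k - a + k * b"
    and "a * ln (a / b) - a * ln k - a + k * b = 0 \<longleftrightarrow> a = k * b"
proof -
  have "0 \<le> a * ln (a / b) - a * ln k - a + k * b \<and>
        (a * ln (a / b) - a * ln k - a + k * b = 0 \<longleftrightarrow> a = k * b)"
  proof (cases "a = 0")
    case True
    then show ?thesis using assms by auto
  next
    case False
    then have a: "0 < a" and b: "0 < b" using assms by auto
    define y where "y = k * b / a"
    have y: "0 < y" using a b assms(4) by (simp add: y_def)
    have "a * ln (a / b) - a * ln k - a + k * b = a * (y - 1 - ln y)"
      using a b assms(4) by (simp add: y_def ln_div ln_mult field_simps)
    moreover have "0 \<le> y - 1 - ln y" using ln_le_minus_one[OF y] by simp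
    moreover have "y - 1 - ln y = 0 \<longleftrightarrow> a = k * b"
      using ln_eq_minus_one[OF y] a by (auto simp: y_def field_simps)
    ultimately show ?thesis using a by simp
  qed
  then show "0 \<le> a * ln (a / b) - a * ln k - a + k * b"
    and "a * ln (a / b) - a * ln k - a + k * b = 0 \<longleftrightarrow> a = k * b" by auto
qed

lemma log_sum_inequality:
  fixes a b :: "'i \<Rightarrow> real"
  assumes A: "finite A" and a: "\<And>x. x \<in> A \<Longrightarrow> 0 \<le> a x" and b: "\<And>x. x \<in> A \<Longrightarrow> 0 \<le> b x"
    and ab: "\<And>x. x \<in> A \<Longrightarrow> 0 < a x \<Longrightarrow> 0 < b x"
  shows "sum a A * ln (sum a A / sum b A) \<le> (\<Sum>x\<in>A. a x * ln (a x / b x))"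
    and "sum a A * ln (sum a A / sum b A) = (\<Sum>x\<in>A. a x * ln (a x / b x))
           \<longleftrightarrow> (\<exists>c. \<forall>x\<in>A. a x = c * b x)"
proof -
  have "sum a A * ln (sum a A / sum b A) \<le> (\<Sum>x\<in>A. a x * ln (a x / b x)) \<and>
        (sum a A * ln (sum a A / sum b A) = (\<Sum>x\<in>A. a x * ln (a x / b x))
           \<longleftrightarrow> (\<exists>c. \<forall>x\<in>A. a x = c * b x))"
  proof (cases "sum a A = 0")
    case True
    then have "\<forall>x\<in>A. a x = 0" using A a by (simp add: sum_nonneg_eq_0_iff)
    then show ?thesis using True by (auto intro: exI[of _ 0])
  next
    case False
    then obtain x0 where x0: "x0 \<in> A" "0 < a x0"
      using a by (metis less_eq_real_def sum.neutral)
    have "0 < sum a A" using False a by (simp add: order_less_le sum_nonneg)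
    moreover have "0 < sum b A"
      using A x0 ab b by (metis sum_pos2)
    ultimately have k_pos: "0 < sum a A / sum b A" by simp
    define k where "k = sum a A / sum b A"
    \<comment> \<open>with k the ratio of the totals, the gap is the sum of the term bounds\<close>
    define e where "e x = a x * ln (a x / b x) - a x * ln k - a x + k * b x" for x
    have "(\<Sum>x\<in>A. e x) = (\<Sum>x\<in>A. a x * ln (a x / b x)) - sum a A * ln k - sum a A + k * sum b A"
      by (simp add: e_def sum_subtractf sum.distrib sum_distrib_left sum_distrib_right)
    also have "k * sum b A = sum a A" using \<open>0 < sum b A\<close> by (simp add: k_def)
    finally have gap: "(\<Sum>x\<in>A. a x * ln (a x / b x)) - sum a A * ln k = (\<Sum>x\<in>A. e x)" by simp
    have e: "0 \<le> e x" "e x = 0 \<longleftrightarrow> a x = k * b x" if "x \<in> A" for x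
      using log_sum_term_bound[OF a b ab k_pos] that unfolding e_def k_def by auto
    have "(\<exists>c. \<forall>x\<in>A. a x = c * b x) \<longleftrightarrow> (\<forall>x\<in>A. a x = k * b x)"
    proof
      assume "\<exists>c. \<forall>x\<in>A. a x = c * b x"
      then obtain c where c: "\<forall>x\<in>A. a x = c * b x" by blast
      then have "sum a A = c * sum b A" by (simp add: sum_distrib_left)
      then show "\<forall>x\<in>A. a x = k * b x" using c \<open>0 < sum b A\<close> by (simp add: k_def)
    qed blast
    moreover have "0 \<le> sum e A" and "sum e A = 0 \<longleftrightarrow> (\<forall>x\<in>A. a x = k * b x)"
      using e A by (simp_all add: sum_nonneg sum_nonneg_eq_0_iff)
    ultimately show ?thesis using gap unfolding k_def by auto
  qed
  then show "sum a A * ln (sum a A / sum b A) \<le> (\<Sum>x\<in>A. a x * ln (a x / b x))"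
    and "sum a A * ln (sum a A / sum b A) = (\<Sum>x\<in>A. a x * ln (a x / b x))
           \<longleftrightarrow> (\<exists>c. \<forall>x\<in>A. a x = c * b x)" by auto
qed

lemma KL_eq_sum:
  fixes p r :: "'a::finite \<Rightarrow> real"
  assumes "\<And>x. 0 < r x"
  shows "KL p r = ereal (\<Sum>x\<in>UNIV. p x * ln (p x / r x))"
  unfolding KL_def using assms by simp

lemma KL_neq_infinity_imp_pos:
  assumes "KL p r \<noteq> \<infinity>" "0 < p x"
  shows "0 < r x"
  using assms unfolding KL_def by (auto split: if_splits)

lemma normalized_reference_in_expfam: "(\<lambda>a. nu a / sum nu UNIV) \<in> expfam nu f d"
  unfolding expfam_def by (rule CollectI, rule exI[of _ "\<lambda>_. 0"]) simp

lemma KL_minimizer_pos: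
  fixes p pt nu :: "'a::finite \<Rightarrow> real"
  assumes p: "\<And>a. 0 < p a" and nu: "\<And>a. 0 < nu a"
    and min: "\<forall>r\<in>closure (expfam nu f d). KL p pt \<le> KL p r"
  shows "0 < pt a"
proof -
  define r0 where "r0 a = nu a / sum nu UNIV" for a
  have "r0 \<in> closure (expfam nu f d)"
    using closure_subset normalized_reference_in_expfam[of nu f d] unfolding r0_def by (rule subsetD)
  then have le: "KL p pt \<le> KL p r0" using min by blast
  have "0 < r0 x" for x using nu by (simp add: r0_def sum_pos)
  then have "KL p r0 \<noteq> \<infinity>" by (simp add: KL_eq_sum)
  with le have "KL p pt \<noteq> \<infinity>" by (metis ereal_infty_less_eq(1))
  then show ?thesis by (rule KL_neq_infinity_imp_pos) (rule p)
qed

lemma outdist_nonneg: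
  assumes "\<And>a. 0 \<le> p a" "channel UNIV q"
  shows "0 \<le> outdist p q t"
  using assms unfolding outdist_def channel_def by (simp add: sum_nonneg)

lemma outdist_pos_iff:
  assumes p: "\<And>a. 0 < p a" and q: "channel UNIV q"
  shows "0 < outdist p q t \<longleftrightarrow> (\<exists>a. 0 < q a t)"
proof -
  have "0 \<le> p a * q a t" for a using p[of a] q unfolding channel_def by simp
  then have "0 < outdist p q t \<longleftrightarrow> (\<exists>a. 0 < p a * q a t)"
    unfolding outdist_def by (simp add: sum_pos_iff_ex_pos)
  also have "\<dots> \<longleftrightarrow> (\<exists>a. 0 < q a t)"
    using p by (simp add: zero_less_mult_iff) (meson less_asym)
  finally show ?thesis .
qed

lemma outdist_has_sum:
  assumes "channel UNIV q"
  shows "(outdist p q has_sum sum p UNIV) UNIV"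
proof -
  have "((\<lambda>t. \<Sum>a\<in>UNIV. p a * q a t) has_sum (\<Sum>a\<in>UNIV. p a * 1)) UNIV"
    using assms unfolding channel_def by (intro has_sum_sum has_sum_cmult_right) auto
  then show ?thesis unfolding outdist_def by simp
qed

lemma outdist_log_sum:
  fixes p r :: "'a::finite \<Rightarrow> real"
  assumes p: "\<And>a. 0 < p a" and r: "\<And>a. 0 < r a" and q: "channel UNIV q"
  shows "outdist p q t * ln (outdist p q t / outdist r q t) \<le> outdist (\<lambda>a. p a * ln (p a / r a)) q t"
    and "outdist p q t * ln (outdist p q t / outdist r q t) = outdist (\<lambda>a. p a * ln (p a / r a)) q t
           \<longleftrightarrow> (\<exists>c. \<forall>a. 0 < q a t \<longrightarrow> p a / r a = c)"
proof -
  define w where "w a = p a * q a t" for a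
  define v where "v a = r a * q a t" for a
  have q_nonneg: "0 \<le> q a t" for a using q unfolding channel_def by simp
  have w_nonneg: "0 \<le> w a" and v_nonneg: "0 \<le> v a" and wv: "0 < w a \<Longrightarrow> 0 < v a" for a
    using p[of a] r[of a] q_nonneg[of a] by (auto simp: w_def v_def zero_less_mult_iff)
  have "w a * ln (w a / v a) = p a * ln (p a / r a) * q a t" for a
    using r[of a] by (cases "q a t = 0") (simp_all add: w_def v_def)
  then have rhs: "outdist (\<lambda>a. p a * ln (p a / r a)) q t = (\<Sum>a\<in>UNIV. w a * ln (w a / v a))"
    by (simp add: outdist_def)
  have lhs: "outdist p q t * ln (outdist p q t / outdist r q t) = sum w UNIV * ln (sum w UNIV / sum v UNIV)"
    by (simp add: w_def v_def outdist_def)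
  have "w a = c * v a \<longleftrightarrow> (0 < q a t \<longrightarrow> p a / r a = c)" for a c
    using r[of a] q_nonneg[of a] by (auto simp: w_def v_def field_simps)
  then have "(\<exists>c. \<forall>a. w a = c * v a) \<longleftrightarrow> (\<exists>c. \<forall>a. 0 < q a t \<longrightarrow> p a / r a = c)" by simp
  then show "outdist p q t * ln (outdist p q t / outdist r q t) \<le> outdist (\<lambda>a. p a * ln (p a / r a)) q t"
    and "outdist p q t * ln (outdist p q t / outdist r q t) = outdist (\<lambda>a. p a * ln (p a / r a)) q t
           \<longleftrightarrow> (\<exists>c. \<forall>a. 0 < q a t \<longrightarrow> p a / r a = c)"
    using log_sum_inequality[of UNIV w v] w_nonneg v_nonneg wv unfolding lhs rhs by auto
qed

lemma KL_outdist_le: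
  fixes p r :: "'a::finite \<Rightarrow> real"
  assumes p: "\<And>a. 0 < p a" and r: "\<And>a. 0 < r a" and q: "channel UNIV q"
  shows "KL (outdist p q) (outdist r q) \<le> KL p r"
    and "KL (outdist p q) (outdist r q) = KL p r \<longleftrightarrow> (\<forall>t. \<exists>c. \<forall>a. 0 < q a t \<longrightarrow> p a / r a = c)"
proof -
  define g where "g t = outdist p q t * ln (outdist p q t / outdist r q t)" for t
  define S where "S = outdist (\<lambda>a. p a * ln (p a / r a)) q"
  have out_pos: "0 < outdist p q t \<Longrightarrow> 0 < outdist r q t" for t
    using outdist_pos_iff[of p q t] outdist_pos_iff[of r q t] p r q by blast
  have g_le_S: "g t \<le> S t" for t
    unfolding g_def S_def using outdist_log_sum(1)[where p=p and r=r, OF p r q] .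
  have S_has_sum: "(S has_sum (\<Sum>a\<in>UNIV. p a * ln (p a / r a))) UNIV"
    unfolding S_def using q by (rule outdist_has_sum)
  then have S_summable: "S summable_on UNIV" by (rule has_sum_imp_summable)
  \<comment> \<open>the term bound with k = 1 (that is, ln x \<le> x - 1) bounds g below by a summable function\<close>
  have diff_le_g: "outdist p q t - outdist r q t \<le> g t" for t
  proof -
    have "0 \<le> outdist p q t" "0 \<le> outdist r q t"
      using outdist_nonneg p r q by (metis less_imp_le)+
    then show ?thesis
      using log_sum_term_bound(1)[of "outdist p q t" "outdist r q t" 1] out_pos[of t]
      by (simp add: g_def)
  qed
  have "(\<lambda>t. outdist p q t - outdist r q t) summable_on UNIV"
    using has_sum_diff[OF outdist_has_sum[OF q] outdist_has_sum[OF q]] by (rule has_sum_imp_summable)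
  then have g_summable: "g summable_on UNIV"
    by (rule summable_on_between[OF _ S_summable]) (use diff_le_g g_le_S in auto)
  have "KL (outdist p q) (outdist r q) = ereal (infsum g UNIV)"
    unfolding KL_def g_def[symmetric] using out_pos g_summable by auto
  moreover have "KL p r = ereal (infsum S UNIV)"
    using S_has_sum r by (simp add: KL_eq_sum infsumI)
  moreover have "infsum g UNIV \<le> infsum S UNIV"
    using g_summable S_summable g_le_S by (rule infsum_mono)
  moreover have "infsum g UNIV = infsum S UNIV \<longleftrightarrow> (\<forall>t. g t = S t)"
    using g_summable S_summable g_le_S by (simp add: infsum_eq_iff_pointwise)
  moreover have "g t = S t \<longleftrightarrow> (\<exists>c. \<forall>a. 0 < q a t \<longrightarrow> p a / r a = c)" for t
    unfolding g_def S_def using outdist_log_sum(2)[where p=p and r=r, OF p r q] .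
  ultimately show "KL (outdist p q) (outdist r q) \<le> KL p r"
    and "KL (outdist p q) (outdist r q) = KL p r \<longleftrightarrow> (\<forall>t. \<exists>c. \<forall>a. 0 < q a t \<longrightarrow> p a / r a = c)"
    by auto
qed

lemma congruent_channel_iff_labelling:
  assumes "channel B \<gamma>"
  shows "congruent_channel B \<gamma> \<longleftrightarrow> (\<exists>f. (\<forall>t. f t \<in> B) \<and> (\<forall>b\<in>B. \<forall>t. 0 < \<gamma> b t \<longrightarrow> f t = b))"
proof -
  have nonneg: "\<And>b t. b \<in> B \<Longrightarrow> 0 \<le> \<gamma> b t" and sum1: "\<And>b. b \<in> B \<Longrightarrow> (\<gamma> b has_sum 1) UNIV"
    using assms unfolding channel_def by auto
  show ?thesis
  proof
    assume "congruent_channel B \<gamma>"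
    then obtain f where f: "\<And>t. f t \<in> B" and
      sums: "\<And>b b'. b \<in> B \<Longrightarrow> b' \<in> B \<Longrightarrow> (\<Sum>\<^sub>\<infinity>t\<in>{t. f t = b'}. \<gamma> b t) = (if b = b' then 1 else 0)"
      unfolding congruent_channel_def by blast
    have "f t = b" if b: "b \<in> B" and pos: "0 < \<gamma> b t" for b t
    proof (rule ccontr)
      assume "f t \<noteq> b"
      then have "(\<Sum>\<^sub>\<infinity>s\<in>{s. f s = f t}. \<gamma> b s) \<le> 0" using sums[OF b f] by simp
      moreover have "\<gamma> b summable_on {s. f s = f t}"
        using summable_on_subset[OF has_sum_imp_summable[OF sum1[OF b]]] by blast
      ultimately have "\<gamma> b t = 0" by (rule nonneg_infsum_le_0D) (use nonneg b in auto)
      then show False using pos by simp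
    qed
    then show "\<exists>f. (\<forall>t. f t \<in> B) \<and> (\<forall>b\<in>B. \<forall>t. 0 < \<gamma> b t \<longrightarrow> f t = b)" using f by blast
  next
    assume "\<exists>f. (\<forall>t. f t \<in> B) \<and> (\<forall>b\<in>B. \<forall>t. 0 < \<gamma> b t \<longrightarrow> f t = b)"
    then obtain f where f: "\<And>t. f t \<in> B" and label: "\<And>b t. b \<in> B \<Longrightarrow> 0 < \<gamma> b t \<Longrightarrow> f t = b"
      by blast
    have vanish: "\<gamma> b t = 0" if "b \<in> B" "f t \<noteq> b" for b t
      using label[of b t] nonneg[of b t] that by fastforce
    have "(\<Sum>\<^sub>\<infinity>t\<in>{t. f t = b'}. \<gamma> b t) = (if b = b' then 1 else 0)" if b: "b \<in> B" for b b'
    proof (cases "b = b'")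
      case True
      then have "(\<Sum>\<^sub>\<infinity>t\<in>{t. f t = b'}. \<gamma> b t) = (\<Sum>\<^sub>\<infinity>t\<in>UNIV. \<gamma> b t)"
        by (intro infsum_cong_neutral) (use vanish b in auto)
      also have "\<dots> = 1" using sum1[OF b] by (rule infsumI)
      finally show ?thesis using True by simp
    next
      case False
      then have "(\<Sum>\<^sub>\<infinity>t\<in>{t. f t = b'}. \<gamma> b t) = (\<Sum>\<^sub>\<infinity>t\<in>{t. f t = b'}. 0)"
        by (intro infsum_cong) (use vanish b in auto)
      then show ?thesis using False by simp
    qed
    then show "congruent_channel B \<gamma>" unfolding congruent_channel_def using f by blast
  qed
qed

lemma qbar_pos_iff:
  fixes p :: "'a::finite \<Rightarrow> real"
  assumes p: "\<And>a. 0 < p a" and q: "channel UNIV q" and "B \<noteq> {}"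
  shows "0 < qbar p q B t \<longleftrightarrow> (\<exists>a\<in>B. 0 < q a t)"
proof -
  have "0 \<le> q a t * p a" for a using p[of a] q unfolding channel_def by simp
  then have "0 < (\<Sum>a\<in>B. q a t * p a) \<longleftrightarrow> (\<exists>a\<in>B. 0 < q a t * p a)"
    by (simp add: sum_pos_iff_ex_pos)
  also have "\<dots> \<longleftrightarrow> (\<exists>a\<in>B. 0 < q a t)"
    using p by (simp add: zero_less_mult_iff) (meson less_asym)
  moreover have "0 < sum p B" using p \<open>B \<noteq> {}\<close> by (intro sum_pos) auto
  ultimately show ?thesis by (simp add: qbar_def zero_less_divide_iff)
qed

lemma channel_qbar:
  fixes p :: "'a::finite \<Rightarrow> real"
  assumes p: "\<And>a. 0 < p a" and q: "channel UNIV q" and nonempty: "{} \<notin> Bs"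
  shows "channel Bs (qbar p q)"
  unfolding channel_def
proof (intro ballI conjI allI)
  fix B t assume "B \<in> Bs"
  then have pB: "0 < sum p B" using nonempty p by (intro sum_pos) auto
  have "0 \<le> q a t * p a" for a using p[of a] q unfolding channel_def by simp
  then show "0 \<le> qbar p q B t" using pB unfolding qbar_def by (simp add: sum_nonneg)
  have "((\<lambda>t. \<Sum>a\<in>B. q a t * p a) has_sum (\<Sum>a\<in>B. 1 * p a)) UNIV"
    using q unfolding channel_def by (intro has_sum_sum has_sum_cmult_left) auto
  then have "((\<lambda>t. (\<Sum>a\<in>B. q a t * p a) * (1 / sum p B)) has_sum (sum p B * (1 / sum p B))) UNIV"
    by (intro has_sum_cmult_left) simp
  then show "(qbar p q B has_sum 1) UNIV" using pB by (simp add: qbar_def[abs_def])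
qed

lemma ex_quotient_kernel_superset_iff:
  "(\<exists>B\<in>UNIV // kernel g. S \<subseteq> B) \<longleftrightarrow> (\<exists>c. \<forall>x\<in>S. g x = c)"
proof
  assume "\<exists>B\<in>UNIV // kernel g. S \<subseteq> B"
  then obtain c where "S \<subseteq> g -` {c}" by (auto simp: quotient_kernel_eq_image)
  then show "\<exists>c. \<forall>x\<in>S. g x = c" by blast
next
  assume "\<exists>c. \<forall>x\<in>S. g x = c"
  then obtain c where c: "\<forall>x\<in>S. g x = c" by blast
  have "\<exists>x0. S \<subseteq> g -` {g x0}"
  proof (cases "S = {}")
    case False
    then obtain x where "x \<in> S" by blast
    then show ?thesis using c by (intro exI[of _ x]) auto
  qed simp
  then show "\<exists>B\<in>UNIV // kernel g. S \<subseteq> B" by (auto simp: quotient_kernel_eq_image)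
qed

lemma classes_eq_quotient_kernel:
  assumes "\<And>a. 0 < pt a"
  shows "classes p pt = UNIV // kernel (\<lambda>a. p a / pt a)"
proof -
  have "p a * pt a' = p a' * pt a \<longleftrightarrow> p a / pt a = p a' / pt a'" for a a'
    using assms[of a] assms[of a'] by (simp add: frac_eq_eq)
  then show ?thesis unfolding classes_def kernel_def by simp
qed

lemma congruent_qbar_iff:
  fixes p :: "'a::finite \<Rightarrow> real"
  assumes p: "\<And>a. 0 < p a" and q: "channel UNIV q" and E: "equiv UNIV E"
  shows "congruent_channel (UNIV // E) (qbar p q) \<longleftrightarrow> (\<forall>t. \<exists>B\<in>UNIV // E. {a. 0 < q a t} \<subseteq> B)"
proof -
  have nonempty: "{} \<notin> UNIV // E" using E in_quotient_imp_non_empty by blast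
  then have "channel (UNIV // E) (qbar p q)" using p q by (intro channel_qbar)
  moreover have "0 < qbar p q B t \<longleftrightarrow> (\<exists>a\<in>B. 0 < q a t)" if "B \<in> UNIV // E" for B t
    using qbar_pos_iff[of p q B t] p q nonempty that by blast
  ultimately have "congruent_channel (UNIV // E) (qbar p q) \<longleftrightarrow>
      (\<exists>f. (\<forall>t. f t \<in> UNIV // E) \<and> (\<forall>B\<in>UNIV // E. \<forall>t. (\<exists>a\<in>B. 0 < q a t) \<longrightarrow> f t = B))"
    by (simp add: congruent_channel_iff_labelling)
  also have "\<dots> \<longleftrightarrow> (\<forall>t. \<exists>B\<in>UNIV // E. {a. 0 < q a t} \<subseteq> B)"
  proof
    assume "\<exists>f. (\<forall>t. f t \<in> UNIV // E) \<and> (\<forall>B\<in>UNIV // E. \<forall>t. (\<exists>a\<in>B. 0 < q a t) \<longrightarrow> f t = B)"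
    then obtain f where f: "\<And>t. f t \<in> UNIV // E"
      and label: "\<And>B t. B \<in> UNIV // E \<Longrightarrow> \<exists>a\<in>B. 0 < q a t \<Longrightarrow> f t = B" by blast
    have "a \<in> f t" if "0 < q a t" for a t
    proof -
      have "a \<in> E `` {a}" using E by (rule equiv_class_self) simp
      moreover have "E `` {a} \<in> UNIV // E" by (rule quotientI) simp
      ultimately show ?thesis using label that by metis
    qed
    then show "\<forall>t. \<exists>B\<in>UNIV // E. {a. 0 < q a t} \<subseteq> B" using f by blast
  next
    assume supp: "\<forall>t. \<exists>B\<in>UNIV // E. {a. 0 < q a t} \<subseteq> B"
    define f where "f t = (SOME B. B \<in> UNIV // E \<and> {a. 0 < q a t} \<subseteq> B)" for t
    have f: "f t \<in> UNIV // E" "{a. 0 < q a t} \<subseteq> f t" for t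
      using someI_ex[OF supp[rule_format, of t, unfolded Bex_def]] unfolding f_def by blast+
    have "f t = B" if "B \<in> UNIV // E" "a \<in> B" "0 < q a t" for B a t
      using quotient_disj[OF E f(1)[of t] that(1)] f(2)[of t] that(2,3) by blast
    then show "\<exists>f. (\<forall>t. f t \<in> UNIV // E) \<and> (\<forall>B\<in>UNIV // E. \<forall>t. (\<exists>a\<in>B. 0 < q a t) \<longrightarrow> f t = B)"
      using f(1) by blast
  qed
  finally show ?thesis .
qed

theorem lemma7:
  fixes p pt nu :: "'a::finite \<Rightarrow> real"
    and f :: "'a \<Rightarrow> nat \<Rightarrow> real" and d :: nat
    and q :: "'a \<Rightarrow> nat \<Rightarrow> real"
  assumes p_pos: "\<forall>a. p a > 0" and p_sum: "sum p UNIV = 1"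
    and nu_pos: "\<forall>a. nu a > 0"
    and pt_in: "pt \<in> closure (expfam nu f d)"
    and pt_min: "\<forall>r\<in>closure (expfam nu f d). KL p pt \<le> KL p r"
    and q_ch: "channel UNIV q"
  shows "KL (outdist p q) (outdist pt q) \<le> KL p pt
    \<and> (KL (outdist p q) (outdist pt q) = KL p pt \<longleftrightarrow>
         (\<forall>t. outdist p q t > 0 \<longrightarrow> (\<exists>Aj\<in>classes p pt. {a. q a t > 0} \<subseteq> Aj)))
    \<and> ((\<forall>t. outdist p q t > 0 \<longrightarrow> (\<exists>Aj\<in>classes p pt. {a. q a t > 0} \<subseteq> Aj)) \<longleftrightarrow>
         congruent_channel (classes p pt) (qbar p q))"
proof -
  have p: "\<And>a. 0 < p a" and nu: "\<And>a. 0 < nu a" using p_pos nu_pos by blast+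
  have pt: "\<And>a. 0 < pt a"
    using KL_minimizer_pos[where p=p and nu=nu and pt=pt, OF p nu pt_min] .
  have classes: "classes p pt = UNIV // kernel (\<lambda>a. p a / pt a)"
    using classes_eq_quotient_kernel[where pt=pt, OF pt] .
  define supp_in_class where
    "supp_in_class t \<longleftrightarrow> (\<exists>Aj\<in>classes p pt. {a. 0 < q a t} \<subseteq> Aj)" for t
  have supp_in_class_iff: "supp_in_class t \<longleftrightarrow> (\<exists>c. \<forall>a. 0 < q a t \<longrightarrow> p a / pt a = c)" for t
    unfolding supp_in_class_def classes ex_quotient_kernel_superset_iff by simp
  have "(0 < outdist p q t \<longrightarrow> supp_in_class t) \<longleftrightarrow> supp_in_class t" for t
    using outdist_pos_iff[where p=p, OF p q_ch] supp_in_class_iff by blast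
  then have guard: "(\<forall>t. 0 < outdist p q t \<longrightarrow> supp_in_class t) \<longleftrightarrow> (\<forall>t. supp_in_class t)"
    by simp
  have congruent: "congruent_channel (classes p pt) (qbar p q) \<longleftrightarrow> (\<forall>t. supp_in_class t)"
    unfolding supp_in_class_def classes
    using congruent_qbar_iff[where p=p, OF p q_ch equiv_kernel] .
  have "(\<forall>t. supp_in_class t) \<longleftrightarrow> (\<forall>t. \<exists>c. \<forall>a. 0 < q a t \<longrightarrow> p a / pt a = c)"
    using supp_in_class_iff by blast
  then show ?thesis
    unfolding supp_in_class_def[symmetric] guard congruent
    using KL_outdist_le[where p=p and r=pt, OF p pt q_ch] by simp
qed

end
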